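(* Let $P\in\mathcal S^d$ be such that $\mathcal N_1(P)$ and $S_2:=\mathcal N_2(P)-\mathcal L_{12}(P)^\top\mathcal N_1(P)^{-1}\mathcal L_{12}(P)$ are invertible, and set $$K_2^*=\big(\mathcal L_{12}(P)^\top\mathcal N_1(P)^{-1}\mathcal L_{12}(P)-\mathcal N_2(P)\big)^{-1}\big(\mathcal L_2(P)^\top-\mathcal L_{12}(P)^\top\mathcal N_1(P)^{-1}\mathcal L_1(P)^\top\big).$$ Define $\mathcal M^{2*}(P)=\mathcal M(P)+\mathcal L_2(P)K_2^*+(\mathcal L_2(P)K_2^* )^\top+(K_2^* )^\top\mathcal N_2(P)K_2^*$, $\mathcal L^{2*}_1(P)=\mathcal L_1(P)+(\mathcal L_{12}(P)K_2^* )^\top$, $\mathcal N^{2*}_1(P)=\mathcal N_1(P)$. Then $P$ solves $0=\mathcal M^{2*}(P)-\mathcal L^{2*}_1(P)\mathcal N^{2*}_1(P)^{-1}\mathcal L^{2*}_1(P)^\top$ if and only if $P$ solves $0=\mathcal M(P)-\mathcal L(P)\mathcal N(P)^{-1}\mathcal L(P)^\top$.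
   Context: $\mathcal S^d$: symmetric $d\times d$ matrices. Fix $d,\ell\ge1$, $\gamma\in[0,1]$, $A\in\mathbb R^{d\times d}$, $B_1,B_2\in\mathbb R^{d\times\ell}$, $Q\in\mathcal S^d$, $R_1,R_2\in\mathcal S^\ell$. For $P\in\mathcal S^d$: $\mathcal M(P)=\gamma A^\top PA-P+Q$, $\mathcal L_i(P)=\gamma A^\top PB_i$ ($i=1,2$), $\mathcal L_{12}(P)=\gamma B_1^\top PB_2$, $\mathcal N_1(P)=\gamma B_1^\top PB_1+R_1$, $\mathcal N_2(P)=\gamma B_2^\top PB_2-R_2$, $\mathcal L(P)=[\mathcal L_1(P),\mathcal L_2(P)]\in\mathbb R^{d\times2\ell}$, $\mathcal N(P)=\begin{bmatrix}\mathcal N_1(P)&\mathcal L_{12}(P)\\\mathcal L_{12}(P)^\top&\mathcal N_2(P)\end{bmatrix}$ (which is invertible under the hypotheses). *)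

theory Defs
  imports "HOL-Analysis.Analysis"
begin

text \<open>Matrices are Cartesian-product matrices: a (m x n) real matrix is real^'n^'m.
  State dimension d is the finite type 'd, control dimension l is the finite type 'l;
  the stacked control dimension 2l is the sum type 'l + 'l.\<close>

definition Mop :: "real \<Rightarrow> real^'d^'d \<Rightarrow> real^'d^'d \<Rightarrow> real^'d^'d \<Rightarrow> real^'d^'d" where
  "Mop \<gamma> A Q P = \<gamma> *\<^sub>R (transpose A ** P ** A) - P + Q"

definition Lop :: "real \<Rightarrow> real^'d^'d \<Rightarrow> real^'l^'d \<Rightarrow> real^'d^'d \<Rightarrow> real^'l^'d" where
  "Lop \<gamma> A B P = \<gamma> *\<^sub>R (transpose A ** P ** B)"

definition L12op :: "real \<Rightarrow> real^'l^'d \<Rightarrow> real^'l^'d \<Rightarrow> real^'d^'d \<Rightarrow> real^'l^'l" where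
  "L12op \<gamma> B1 B2 P = \<gamma> *\<^sub>R (transpose B1 ** P ** B2)"

definition N1op :: "real \<Rightarrow> real^'l^'d \<Rightarrow> real^'l^'l \<Rightarrow> real^'d^'d \<Rightarrow> real^'l^'l" where
  "N1op \<gamma> B1 R1 P = \<gamma> *\<^sub>R (transpose B1 ** P ** B1) + R1"

definition N2op :: "real \<Rightarrow> real^'l^'d \<Rightarrow> real^'l^'l \<Rightarrow> real^'d^'d \<Rightarrow> real^'l^'l" where
  "N2op \<gamma> B2 R2 P = \<gamma> *\<^sub>R (transpose B2 ** P ** B2) - R2"

definition Lfull :: "real \<Rightarrow> real^'d^'d \<Rightarrow> real^'l^'d \<Rightarrow> real^'l^'d \<Rightarrow> real^'d^'d \<Rightarrow> real^('l + 'l)^'d" where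
  "Lfull \<gamma> A B1 B2 P = (\<chi> i j. case j of Inl k \<Rightarrow> Lop \<gamma> A B1 P $ i $ k
                                        | Inr k \<Rightarrow> Lop \<gamma> A B2 P $ i $ k)"

definition Nfull :: "real \<Rightarrow> real^'l^'d \<Rightarrow> real^'l^'d \<Rightarrow> real^'l^'l \<Rightarrow> real^'l^'l \<Rightarrow> real^'d^'d
    \<Rightarrow> real^('l + 'l)^('l + 'l)" where
  "Nfull \<gamma> B1 B2 R1 R2 P = (\<chi> i j. case (i, j) of
      (Inl a, Inl b) \<Rightarrow> N1op \<gamma> B1 R1 P $ a $ b
    | (Inl a, Inr b) \<Rightarrow> L12op \<gamma> B1 B2 P $ a $ b
    | (Inr a, Inl b) \<Rightarrow> transpose (L12op \<gamma> B1 B2 P) $ a $ b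
    | (Inr a, Inr b) \<Rightarrow> N2op \<gamma> B2 R2 P $ a $ b)"

definition K2star :: "real \<Rightarrow> real^'d^'d \<Rightarrow> real^'l^'d \<Rightarrow> real^'l^'d \<Rightarrow> real^'l^'l \<Rightarrow> real^'l^'l
    \<Rightarrow> real^'d^'d \<Rightarrow> real^'d^'l" where
  "K2star \<gamma> A B1 B2 R1 R2 P =
     matrix_inv (transpose (L12op \<gamma> B1 B2 P) ** matrix_inv (N1op \<gamma> B1 R1 P) ** L12op \<gamma> B1 B2 P
                 - N2op \<gamma> B2 R2 P)
     ** (transpose (Lop \<gamma> A B2 P)
         - transpose (L12op \<gamma> B1 B2 P) ** matrix_inv (N1op \<gamma> B1 R1 P) ** transpose (Lop \<gamma> A B1 P))"

definition M2star :: "real \<Rightarrow> real^'d^'d \<Rightarrow> real^'l^'d \<Rightarrow> real^'l^'d \<Rightarrow> real^'d^'d \<Rightarrow> real^'l^'l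
    \<Rightarrow> real^'l^'l \<Rightarrow> real^'d^'d \<Rightarrow> real^'d^'d" where
  "M2star \<gamma> A B1 B2 Q R1 R2 P =
     (let K = K2star \<gamma> A B1 B2 R1 R2 P in
      Mop \<gamma> A Q P + Lop \<gamma> A B2 P ** K + transpose (Lop \<gamma> A B2 P ** K)
      + transpose K ** N2op \<gamma> B2 R2 P ** K)"

definition L1star :: "real \<Rightarrow> real^'d^'d \<Rightarrow> real^'l^'d \<Rightarrow> real^'l^'d \<Rightarrow> real^'l^'l \<Rightarrow> real^'l^'l
    \<Rightarrow> real^'d^'d \<Rightarrow> real^'l^'d" where
  "L1star \<gamma> A B1 B2 R1 R2 P =
     Lop \<gamma> A B1 P + transpose (L12op \<gamma> B1 B2 P ** K2star \<gamma> A B1 B2 R1 R2 P)"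

definition N1star :: "real \<Rightarrow> real^'l^'d \<Rightarrow> real^'l^'l \<Rightarrow> real^'d^'d \<Rightarrow> real^'l^'l" where
  "N1star \<gamma> B1 R1 P = N1op \<gamma> B1 R1 P"

end

theory Submission
  imports Defs
begin

(* Both Riccati operators equal the same matrix
     M - L1 N1^-1 L1^T - (L2 - L1 N1^-1 L12) S2^-1 (L2^T - L12^T N1^-1 L1^T).
   For the full operator this is the Schur-complement formula for the inverse of the block
   matrix N(P).  For the reduced one, K2* solves S2 K2* = -(L2^T - L12^T N1^-1 L1^T), so
   completing the square in K2 cancels its quadratic term against a cross term and leaves the
   same expression. *)

lemma matrix_mult_uminus_left: "(- A :: 'a::ring_1^'n^'m) ** B = - (A ** B)"
  by (simp add: matrix_matrix_mult_def vec_eq_iff sum_negf)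

lemma matrix_mult_uminus_right: "(A :: 'a::ring_1^'n^'m) ** (- B) = - (A ** B)"
  by (simp add: matrix_matrix_mult_def vec_eq_iff sum_negf)

lemma matrix_add_rdistrib: "((A :: 'a::semiring_1^'n^'m) + B) ** C = A ** C + B ** C"
  by (simp add: matrix_matrix_mult_def vec_eq_iff sum.distrib distrib_right)

lemma matrix_diff_ldistrib: "(A :: 'a::ring_1^'n^'m) ** (B - C) = A ** B - A ** C"
  by (simp add: matrix_matrix_mult_def vec_eq_iff sum_subtractf right_diff_distrib)

lemma matrix_diff_rdistrib: "((A :: 'a::ring_1^'n^'m) - B) ** C = A ** C - B ** C"
  by (simp add: matrix_matrix_mult_def vec_eq_iff sum_subtractf left_diff_distrib)

lemma transpose_add: "transpose (A + B) = transpose A + transpose (B :: 'a::plus^'n^'m)"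
  by (simp add: transpose_def vec_eq_iff)

lemma transpose_diff: "transpose (A - B) = transpose A - transpose (B :: 'a::minus^'n^'m)"
  by (simp add: transpose_def vec_eq_iff)

lemma transpose_uminus: "transpose (- A) = - transpose (A :: 'a::uminus^'n^'m)"
  by (simp add: transpose_def vec_eq_iff)

lemmas matrix_ring_simps =
  matrix_add_ldistrib matrix_add_rdistrib matrix_diff_ldistrib matrix_diff_rdistrib
  matrix_mult_uminus_left matrix_mult_uminus_right
  transpose_add transpose_diff transpose_uminus matrix_transpose_mul

lemma matrix_inv_right:
  assumes "invertible (A :: 'a::semiring_1^'n^'m)"
  shows "A ** matrix_inv A = mat 1"
  using someI_ex[OF assms[unfolded invertible_def]] by (simp add: matrix_inv_def)

lemma matrix_inv_unique:
  fixes A B :: "'a::field^'n^'n"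
  assumes "A ** B = mat 1"
  shows "matrix_inv A = B"
proof -
  have "invertible A"
    using assms invertible_right_inverse by blast
  moreover have "B ** A = mat 1"
    using assms matrix_left_right_inverse by blast
  ultimately have "B ** (A ** matrix_inv A) = matrix_inv A"
    by (simp add: matrix_mul_assoc)
  then show ?thesis
    using matrix_inv_right[OF \<open>invertible A\<close>] by simp
qed

lemma matrix_inv_uminus:
  fixes A :: "'a::field^'n^'n"
  assumes "invertible A"
  shows "matrix_inv (- A) = - matrix_inv A"
  by (rule matrix_inv_unique)
    (simp add: matrix_mult_uminus_left matrix_mult_uminus_right matrix_inv_right[OF assms])

definition block_matrix ::
    "'a^'m^'p \<Rightarrow> 'a^'n^'p \<Rightarrow> 'a^'m^'q \<Rightarrow> 'a^'n^'q \<Rightarrow> 'a^('m + 'n)^('p + 'q)" where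
  "block_matrix X Y Z W = (\<chi> i j. case (i, j) of
      (Inl a, Inl b) \<Rightarrow> X $ a $ b
    | (Inl a, Inr b) \<Rightarrow> Y $ a $ b
    | (Inr a, Inl b) \<Rightarrow> Z $ a $ b
    | (Inr a, Inr b) \<Rightarrow> W $ a $ b)"

definition row_block :: "'a^'m^'p \<Rightarrow> 'a^'n^'p \<Rightarrow> 'a^('m + 'n)^'p" where
  "row_block X Y = (\<chi> i j. case j of Inl b \<Rightarrow> X $ i $ b | Inr b \<Rightarrow> Y $ i $ b)"

lemma sum_UNIV_sum_type:
  "(\<Sum>k\<in>UNIV. f k) = (\<Sum>a\<in>UNIV. f (Inl a)) + (\<Sum>b\<in>UNIV. f (Inr b))"
  for f :: "'a::finite + 'b::finite \<Rightarrow> 'c::comm_monoid_add"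
  using sum.Plus[of "UNIV::'a set" "UNIV::'b set" f] by (simp add: comp_def)

lemma block_matrix_mult:
  fixes X :: "'a::semiring_1^'m::finite^'p" and Y :: "'a^'n::finite^'p"
    and Z :: "'a^'m^'q" and W :: "'a^'n^'q"
  shows "block_matrix X Y Z W ** block_matrix X' Y' Z' W'
    = block_matrix (X ** X' + Y ** Z') (X ** Y' + Y ** W') (Z ** X' + W ** Z') (Z ** Y' + W ** W')"
  by (auto simp: vec_eq_iff matrix_matrix_mult_def block_matrix_def sum_UNIV_sum_type
      split: sum.split)

lemma row_block_mult_block_matrix:
  fixes X :: "'a::semiring_1^'m::finite^'p" and Y :: "'a^'n::finite^'p"
  shows "row_block X Y ** block_matrix X' Y' Z' W' = row_block (X ** X' + Y ** Z') (X ** Y' + Y ** W')"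
  by (auto simp: vec_eq_iff matrix_matrix_mult_def block_matrix_def row_block_def sum_UNIV_sum_type
      split: sum.split)

lemma row_block_mult_transpose:
  fixes X :: "'a::comm_semiring_1^'m::finite^'p" and Y :: "'a^'n::finite^'p"
  shows "row_block X Y ** transpose (row_block U V) = X ** transpose U + Y ** transpose V"
  by (auto simp: vec_eq_iff matrix_matrix_mult_def transpose_def row_block_def sum_UNIV_sum_type
      split: sum.split)

lemma mat_1_eq_block_matrix:
  "(mat 1 :: 'a::zero_neq_one^('m::finite + 'n::finite)^('m + 'n)) = block_matrix (mat 1) 0 0 (mat 1)"
  by (auto simp: vec_eq_iff mat_def block_matrix_def split: sum.split)

lemma block_matrix_eq_iff:
  "block_matrix X Y Z W = block_matrix X' Y' Z' W' \<longleftrightarrow> X = X' \<and> Y = Y' \<and> Z = Z' \<and> W = W'"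
  by (auto simp: block_matrix_def vec_eq_iff split: sum.split)

lemma matrix_inv_block_matrix_Schur:
  fixes A :: "'a::field^'m::finite^'m" and B :: "'a^'n::finite^'m" and C :: "'a^'m^'n" and D :: "'a^'n^'n"
  assumes "invertible A" and "invertible (D - C ** matrix_inv A ** B)"
  defines "Ai \<equiv> matrix_inv A" and "Si \<equiv> matrix_inv (D - C ** matrix_inv A ** B)"
  shows "matrix_inv (block_matrix A B C D)
    = block_matrix (Ai + Ai ** B ** Si ** C ** Ai) (- (Ai ** B ** Si)) (- (Si ** C ** Ai)) Si"
proof (rule matrix_inv_unique)
  define S where "S = D - C ** Ai ** B"
  have A: "A ** Ai = mat 1"
    using matrix_inv_right[OF assms(1)] by (simp add: Ai_def)
  have S: "S ** Si = mat 1"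
    using matrix_inv_right[OF assms(2)] by (simp add: S_def Ai_def Si_def)
  have D: "D = S + C ** Ai ** B"
    by (simp add: S_def)
  show "block_matrix A B C D ** block_matrix (Ai + Ai ** B ** Si ** C ** Ai) (- (Ai ** B ** Si))
      (- (Si ** C ** Ai)) Si = mat 1"
    unfolding block_matrix_mult mat_1_eq_block_matrix block_matrix_eq_iff D
    by (simp add: matrix_ring_simps matrix_mul_assoc A S)
qed

lemma row_block_mult_inverse_Schur:
  fixes A :: "'a::field^'m::finite^'m" and B :: "'a^'n::finite^'m" and C :: "'a^'m^'n" and D :: "'a^'n^'n"
    and X1 :: "'a^'m^'p" and X2 :: "'a^'n^'p" and Y1 :: "'a^'m^'q" and Y2 :: "'a^'n^'q"
  assumes "invertible A" and "invertible (D - C ** matrix_inv A ** B)"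
  defines "Ai \<equiv> matrix_inv A" and "Si \<equiv> matrix_inv (D - C ** matrix_inv A ** B)"
  shows "row_block X1 X2 ** matrix_inv (block_matrix A B C D) ** transpose (row_block Y1 Y2)
    = X1 ** Ai ** transpose Y1 + (X2 - X1 ** Ai ** B) ** Si ** (transpose Y2 - C ** Ai ** transpose Y1)"
  unfolding matrix_inv_block_matrix_Schur[OF assms(1,2)] row_block_mult_block_matrix
    row_block_mult_transpose Ai_def Si_def
  by (simp add: matrix_ring_simps matrix_mul_assoc algebra_simps)

lemma completing_square_feedback:
  fixes L1 :: "'a::field^'m::finite^'d" and L2 :: "'a^'n::finite^'d"
    and N1i :: "'a^'m^'m" and C :: "'a^'n^'m" and N2 Si :: "'a^'n^'n"
  assumes Si: "(N2 - transpose C ** N1i ** C) ** Si = mat 1"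
    and V_def: "V = transpose L2 - transpose C ** N1i ** transpose L1"
  defines "K \<equiv> - (Si ** V)"
  shows "L2 ** K + transpose (L2 ** K) + transpose K ** N2 ** K
      - (L1 + transpose (C ** K)) ** N1i ** transpose (L1 + transpose (C ** K))
    = - (L1 ** N1i ** transpose L1) - (L2 - L1 ** N1i ** C) ** Si ** V"
proof -
  define S where "S = N2 - transpose C ** N1i ** C"
  have "L2 ** K + transpose (L2 ** K) + transpose K ** N2 ** K
      - (L1 + transpose (C ** K)) ** N1i ** transpose (L1 + transpose (C ** K))
    = - (L1 ** N1i ** transpose L1) + (L2 - L1 ** N1i ** C) ** K
      + transpose K ** V + transpose K ** (S ** K)"
    by (simp add: S_def V_def matrix_ring_simps matrix_mul_assoc algebra_simps)
  also have "S ** K = - V"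
    using Si by (simp add: S_def K_def matrix_mult_uminus_right matrix_mul_assoc)
  finally show ?thesis
    by (simp add: K_def matrix_mult_uminus_left matrix_mult_uminus_right matrix_mul_assoc)
qed

lemma Lfull_eq_row_block: "Lfull \<gamma> A B1 B2 P = row_block (Lop \<gamma> A B1 P) (Lop \<gamma> A B2 P)"
  by (auto simp: vec_eq_iff Lfull_def row_block_def split: sum.split)

lemma Nfull_eq_block_matrix:
  "Nfull \<gamma> B1 B2 R1 R2 P
    = block_matrix (N1op \<gamma> B1 R1 P) (L12op \<gamma> B1 B2 P) (transpose (L12op \<gamma> B1 B2 P)) (N2op \<gamma> B2 R2 P)"
  by (auto simp: vec_eq_iff Nfull_def block_matrix_def)

lemma reduced_Riccati_eq_full_Riccati:
  assumes "invertible (N1op \<gamma> B1 R1 P)"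
    and "invertible (N2op \<gamma> B2 R2 P
           - transpose (L12op \<gamma> B1 B2 P) ** matrix_inv (N1op \<gamma> B1 R1 P) ** L12op \<gamma> B1 B2 P)"
  shows "M2star \<gamma> A B1 B2 Q R1 R2 P
      - L1star \<gamma> A B1 B2 R1 R2 P ** matrix_inv (N1star \<gamma> B1 R1 P)
        ** transpose (L1star \<gamma> A B1 B2 R1 R2 P)
    = Mop \<gamma> A Q P
      - Lfull \<gamma> A B1 B2 P ** matrix_inv (Nfull \<gamma> B1 B2 R1 R2 P) ** transpose (Lfull \<gamma> A B1 B2 P)"
proof -
  let ?M = "Mop \<gamma> A Q P" and ?L1 = "Lop \<gamma> A B1 P" and ?L2 = "Lop \<gamma> A B2 P"
    and ?N1 = "N1op \<gamma> B1 R1 P" and ?N2 = "N2op \<gamma> B2 R2 P" and ?C = "L12op \<gamma> B1 B2 P"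
  define Si where "Si = matrix_inv (?N2 - transpose ?C ** matrix_inv ?N1 ** ?C)"
  define V where "V = transpose ?L2 - transpose ?C ** matrix_inv ?N1 ** transpose ?L1"
  define Schur_form where "Schur_form = ?M - ?L1 ** matrix_inv ?N1 ** transpose ?L1
    - (?L2 - ?L1 ** matrix_inv ?N1 ** ?C) ** Si ** V"
  have K: "K2star \<gamma> A B1 B2 R1 R2 P = - (Si ** V)"
    using matrix_inv_uminus[OF assms(2)]
    by (simp add: K2star_def Si_def V_def matrix_mult_uminus_left)
  have "M2star \<gamma> A B1 B2 Q R1 R2 P
      - L1star \<gamma> A B1 B2 R1 R2 P ** matrix_inv (N1star \<gamma> B1 R1 P)
        ** transpose (L1star \<gamma> A B1 B2 R1 R2 P) = Schur_form"
    using completing_square_feedback[OF matrix_inv_right[OF assms(2)] V_def]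
    unfolding M2star_def L1star_def N1star_def Let_def K
    by (simp add: Schur_form_def Si_def V_def algebra_simps)
  moreover have "?M - Lfull \<gamma> A B1 B2 P ** matrix_inv (Nfull \<gamma> B1 B2 R1 R2 P)
        ** transpose (Lfull \<gamma> A B1 B2 P) = Schur_form"
    using row_block_mult_inverse_Schur[OF assms(1,2), of ?L1 ?L2 ?L1 ?L2]
    unfolding Lfull_eq_row_block Nfull_eq_block_matrix
    by (simp add: Schur_form_def Si_def V_def)
  ultimately show ?thesis
    by (simp only:)
qed

theorem mainTheorem10:
  fixes \<gamma> :: real
    and A :: "real^'d^'d" and B1 B2 :: "real^'l^'d"
    and Q P :: "real^'d^'d" and R1 R2 :: "real^'l^'l"
  assumes "0 \<le> \<gamma>" and "\<gamma> \<le> 1"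
    and "transpose Q = Q" and "transpose R1 = R1" and "transpose R2 = R2"
    and "transpose P = P"
    and "invertible (N1op \<gamma> B1 R1 P)"
    and "invertible (N2op \<gamma> B2 R2 P
           - transpose (L12op \<gamma> B1 B2 P) ** matrix_inv (N1op \<gamma> B1 R1 P) ** L12op \<gamma> B1 B2 P)"
  shows "(M2star \<gamma> A B1 B2 Q R1 R2 P
            - L1star \<gamma> A B1 B2 R1 R2 P ** matrix_inv (N1star \<gamma> B1 R1 P)
              ** transpose (L1star \<gamma> A B1 B2 R1 R2 P) = 0)
     \<longleftrightarrow> (Mop \<gamma> A Q P
            - Lfull \<gamma> A B1 B2 P ** matrix_inv (Nfull \<gamma> B1 B2 R1 R2 P)
              ** transpose (Lfull \<gamma> A B1 B2 P) = 0)"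
  using reduced_Riccati_eq_full_Riccati[OF assms(7,8)] by simp

end
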